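(* Let $f:\mathbb{R}^n\to\mathbb{R}$ be differentiable, $L$-smooth and $m$-strongly convex ($0<m\le L$), with unique minimizer $x_*$ (so $\nabla f(x_* )=0$). Let $0<\mu<2$, $\delta>0$, $\alpha>0$, and let constants $0<c_1\le c_2<+\infty$ be given. Consider the adaptive fractional order gradient descent (AFOGD) iteration, started from $x_0,x_1\in\mathbb{R}^n$, $$x_{k+1}=x_k-\alpha\,\nabla f(x_k)\,\beta_k\,(\|x_k-x_{k-1}\|_2+\delta)^{1-\mu},$$ where the scalars $\beta_k>0$ are chosen so that $0<c_1\le \beta_k(\|x_k-x_{k-1}\|_2+\delta)^{1-\mu}\le c_2<+\infty$ for all $k$. Write it as the dynamical system $\xi_{k+1}=A\xi_k+Bu_k$, $y_k=C\xi_k$, $x_k=E\xi_k$ with $\xi_k=x_k$, $A=I_n$, $B=-\alpha I_n$, $C=I_n$, $E=I_n$ and input $u_k=\nabla f(x_k)\,\beta_k(\|x_k-x_{k-1}\|_2+\delta)^{1-\mu}$. Suppose: 1. there are fixed points $\xi_*,u_*,y_*$ with $\xi_*=A\xi_*+Bu_*$, $y_*=C\xi_*$, $u_*=\nabla f(y_* )\cdot(\text{the corresponding scaling})$ and $x_*=E\xi_*=y_*$; 2. there exists a symmetric matrix $N\in\mathbb{R}^{2n\times 2n}$ such that $e_k^\top N e_k\ge 0$ for all $k$, where $e_k=[(\xi_k-\xi_* )^\top,(u_k-u_* )^\top]^\top$; 3. there exist a constant $h\ge 0$, a constant $\rho\in(0,1)$, and a positive definite matrix $P$ (with the given $\alpha>0$)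 such that $M+hN\preceq 0$, where $$M=\begin{bmatrix}A^\top PA-\rho^2P & A^\top PB\\ B^\top PA & B^\top PB\end{bmatrix}.$$ Then the sequence $\{x_k\}$ converges $R$-linearly to $x_*$.
   Context: A differentiable $f$ is $L$-smooth if $\|\nabla f(x)-\nabla f(y)\|_2\le L\|x-y\|_2$ for all $x,y$, and $m$-strongly convex if $m\|x-y\|_2^2\le (x-y)^\top(\nabla f(x)-\nabla f(y))$ for all $x,y$. A sequence $\{x_k\}$ converges $R$-linearly to $x_*$ with rate $\rho\in(0,1)$ if there is a constant $c>0$ with $\|x_k-x_*\|_2\le c\rho^k$ for all $k\in\mathbb{N}_+$. $I_n$ is the $n\times n$ identity matrix; $\preceq 0$ means negative semidefinite. *)

theory Defs
  imports "HOL-Analysis.Analysis"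
begin

definition L_smooth :: "real \<Rightarrow> ('a::real_inner \<Rightarrow> 'a) \<Rightarrow> bool" where
  "L_smooth L g \<longleftrightarrow> (\<forall>x y. norm (g x - g y) \<le> L * norm (x - y))"

definition strongly_convex_grad :: "real \<Rightarrow> ('a::real_inner \<Rightarrow> 'a) \<Rightarrow> bool" where
  "strongly_convex_grad m g \<longleftrightarrow> (\<forall>x y. m * (norm (x - y))\<^sup>2 \<le> (x - y) \<bullet> (g x - g y))"

definition blockmat ::
  "real^'n^'n \<Rightarrow> real^'m^'n \<Rightarrow> real^'n^'m \<Rightarrow> real^'m^'m \<Rightarrow> real^('n + 'm)^('n + 'm)" where
  "blockmat M11 M12 M21 M22 =
     (\<chi> i j. case i of
        Inl a \<Rightarrow> (case j of Inl b \<Rightarrow> M11 $ a $ b | Inr b \<Rightarrow> M12 $ a $ b)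
      | Inr a \<Rightarrow> (case j of Inl b \<Rightarrow> M21 $ a $ b | Inr b \<Rightarrow> M22 $ a $ b))"

definition stackvec :: "real^'n \<Rightarrow> real^'m \<Rightarrow> real^('n + 'm)" where
  "stackvec v w = (\<chi> i. case i of Inl a \<Rightarrow> v $ a | Inr b \<Rightarrow> w $ b)"

definition symmetric_mat :: "real^'n^'n \<Rightarrow> bool" where
  "symmetric_mat P \<longleftrightarrow> transpose P = P"

definition pos_def_mat :: "real^'n^'n \<Rightarrow> bool" where
  "pos_def_mat P \<longleftrightarrow> symmetric_mat P \<and> (\<forall>z. z \<noteq> 0 \<longrightarrow> z \<bullet> (P *v z) > 0)"

definition neg_semidef_mat :: "real^'n^'n \<Rightarrow> bool" where
  "neg_semidef_mat Q \<longleftrightarrow> (\<forall>z. z \<bullet> (Q *v z) \<le> 0)"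

end

theory Submission
  imports Defs
begin

text \<open>
  The quadratic form \<open>V \<xi> = (\<xi> - \<xi>\<^sub>*)\<^sup>T P (\<xi> - \<xi>\<^sub>*)\<close> is a Lyapunov function. By the fixed point
  equation the errors obey \<open>\<xi>\<^sub>k\<^sub>+\<^sub>1 - \<xi>\<^sub>* = A (\<xi>\<^sub>k - \<xi>\<^sub>*) + B (u\<^sub>k - u\<^sub>*)\<close>, so evaluating the LMI
  at \<open>e\<^sub>k\<close> gives \<open>V \<xi>\<^sub>k\<^sub>+\<^sub>1 - \<rho>\<^sup>2 V \<xi>\<^sub>k + h e\<^sub>k\<^sup>T N e\<^sub>k \<le> 0\<close>; the IQC \<open>e\<^sub>k\<^sup>T N e\<^sub>k \<ge> 0\<close> then yields
  \<open>V \<xi>\<^sub>k\<^sub>+\<^sub>1 \<le> \<rho>\<^sup>2 V \<xi>\<^sub>k\<close>, and since \<open>P\<close> is positive definite, \<open>\<parallel>x\<^sub>k - x\<^sub>*\<parallel> = O(\<rho>\<^sup>k)\<close>.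
  Smoothness and strong convexity of \<open>f\<close> enter only through the IQC hypothesis on \<open>N\<close>.
\<close>

lemma sum_UNIV_Plus:
  "(\<Sum>i\<in>(UNIV::('a::finite + 'b::finite) set). g i) = (\<Sum>a\<in>UNIV. g (Inl a)) + (\<Sum>b\<in>UNIV. g (Inr b))"
  using sum.Plus[of "UNIV::'a set" "UNIV::'b set" g] by (simp add: comp_def)

lemma inner_stackvec_blockmat_stackvec:
  fixes v :: "real^'n" and w :: "real^'m"
  shows "stackvec v w \<bullet> (blockmat M11 M12 M21 M22 *v stackvec v w)
     = v \<bullet> (M11 *v v) + v \<bullet> (M12 *v w) + w \<bullet> (M21 *v v) + w \<bullet> (M22 *v w)"
  unfolding inner_vec_def matrix_vector_mult_def stackvec_def blockmat_def
  by (simp add: sum_UNIV_Plus sum.distrib sum_distrib_left algebra_simps)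

lemma inner_transpose_matrix_mult:
  fixes v :: "real^'n" and w :: "real^'m" and A :: "real^'n^'k" and B :: "real^'m^'k"
    and P :: "real^'k^'k"
  shows "v \<bullet> ((transpose A ** P ** B) *v w) = (A *v v) \<bullet> (P *v (B *v w))"
  by (metis dot_lmul_matrix vector_transpose_matrix matrix_vector_mul_assoc)

lemma inner_stackvec_dissipation_matrix:
  fixes v :: "real^'n" and w :: "real^'m" and A P :: "real^'n^'n" and B :: "real^'m^'n"
  shows "stackvec v w \<bullet> (blockmat (transpose A ** P ** A - r *\<^sub>R P) (transpose A ** P ** B)
                                (transpose B ** P ** A) (transpose B ** P ** B) *v stackvec v w)
       = (A *v v + B *v w) \<bullet> (P *v (A *v v + B *v w)) - r * (v \<bullet> (P *v v))"
  unfolding inner_stackvec_blockmat_stackvec matrix_vector_mult_diff_rdistrib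
  by (simp add: inner_transpose_matrix_mult scaleR_matrix_vector_assoc[symmetric] matrix_vector_right_distrib
      inner_add_left inner_add_right inner_diff_right)

lemma iqc_lyapunov_decrease:
  fixes v :: "real^'n" and w :: "real^'m" and A P :: "real^'n^'n" and B :: "real^'m^'n"
    and N :: "real^('n + 'm)^('n + 'm)"
  assumes LMI: "neg_semidef_mat
               (blockmat (transpose A ** P ** A - \<rho>\<^sup>2 *\<^sub>R P) (transpose A ** P ** B)
                         (transpose B ** P ** A) (transpose B ** P ** B) + h *\<^sub>R N)"
    and h: "h \<ge> 0"
    and iqc: "stackvec v w \<bullet> (N *v stackvec v w) \<ge> 0"
  shows "(A *v v + B *v w) \<bullet> (P *v (A *v v + B *v w)) \<le> \<rho>\<^sup>2 * (v \<bullet> (P *v v))"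
proof -
  let ?e = "stackvec v w"
  let ?M = "blockmat (transpose A ** P ** A - \<rho>\<^sup>2 *\<^sub>R P) (transpose A ** P ** B)
                      (transpose B ** P ** A) (transpose B ** P ** B)"
  have "?e \<bullet> (?M *v ?e) + h * (?e \<bullet> (N *v ?e)) = ?e \<bullet> ((?M + h *\<^sub>R N) *v ?e)"
    by (simp add: matrix_vector_mult_add_rdistrib scaleR_matrix_vector_assoc[symmetric] inner_add_right)
  also have "\<dots> \<le> 0"
    using LMI unfolding neg_semidef_mat_def by blast
  finally have "?e \<bullet> (?M *v ?e) + h * (?e \<bullet> (N *v ?e)) \<le> 0" .
  moreover have "h * (?e \<bullet> (N *v ?e)) \<ge> 0"
    using h iqc by simp
  ultimately show ?thesis
    unfolding inner_stackvec_dissipation_matrix by simp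
qed

lemma pos_def_mat_quadratic_form_ge:
  fixes P :: "real^'n^'n"
  assumes "pos_def_mat P"
  obtains lam where "lam > 0" "\<And>z. lam * (norm z)\<^sup>2 \<le> z \<bullet> (P *v z)"
proof -
  let ?q = "\<lambda>z. z \<bullet> (P *v z)"
  have "continuous_on (sphere 0 1) ?q"
    by (intro continuous_intros continuous_on_id linear_continuous_on bounded_linear_inner_right
        matrix_vector_mul_bounded_linear)
  moreover have "sphere (0::real^'n) 1 \<noteq> {}"
    by simp
  ultimately obtain z0 where z0: "z0 \<in> sphere 0 1" "\<And>y. y \<in> sphere 0 1 \<Longrightarrow> ?q z0 \<le> ?q y"
    using continuous_attains_inf[OF compact_sphere] by blast
  have "z0 \<noteq> 0"
    using z0(1) by auto
  then have "?q z0 > 0"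
    using assms unfolding pos_def_mat_def by blast
  moreover have "?q z0 * (norm z)\<^sup>2 \<le> ?q z" for z
  proof (cases "z = 0")
    case False
    have "?q z0 \<le> ?q (inverse (norm z) *\<^sub>R z)"
      using False by (intro z0(2)) simp
    also have "\<dots> = ?q z / (norm z)\<^sup>2"
      by (simp add: matrix_vector_mult_scaleR power2_eq_square divide_inverse)
    finally show ?thesis
      using False by (simp add: field_simps)
  qed simp
  ultimately show ?thesis
    using that by blast
qed

lemma R_linear_if_lyapunov_contraction:
  fixes d :: "nat \<Rightarrow> 'a::real_normed_vector" and V :: "'a \<Rightarrow> real"
  assumes lam: "lam > 0" "\<And>z. lam * (norm z)\<^sup>2 \<le> V z"
    and \<rho>: "\<rho> > 0"
    and contr: "\<And>k. k \<ge> 1 \<Longrightarrow> V (d (Suc k)) \<le> \<rho>\<^sup>2 * V (d k)"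
  shows "\<exists>c>0. \<forall>k\<ge>1. norm (d k) \<le> c * \<rho> ^ k"
proof -
  define K where "K = V (d 1) / \<rho>\<^sup>2"
  have "0 \<le> lam * (norm (d 1))\<^sup>2"
    using lam(1) by simp
  then have "0 \<le> V (d 1)"
    using lam(2)[of "d 1"] by linarith
  then have K: "K \<ge> 0"
    by (simp add: K_def)
  \<comment> \<open>\<open>(\<rho> ^ k)\<^sup>2 * K = \<rho> ^ (2 * (k - 1)) * V (d 1)\<close>, stated without natural subtraction\<close>
  have V_le: "V (d k) \<le> (\<rho> ^ k)\<^sup>2 * K" if "k \<ge> 1" for k
    using that
  proof (induction k rule: dec_induct)
    case base
    then show ?case
      using \<rho> by (simp add: K_def)
  next
    case (step k)
    have "V (d (Suc k)) \<le> \<rho>\<^sup>2 * V (d k)"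
      using contr step(1) .
    also have "\<dots> \<le> \<rho>\<^sup>2 * ((\<rho> ^ k)\<^sup>2 * K)"
      using step(3) by (simp add: mult_left_mono)
    also have "\<dots> = (\<rho> ^ Suc k)\<^sup>2 * K"
      by (simp add: power_mult_distrib)
    finally show ?case .
  qed
  define c where "c = sqrt (K / lam)"
  have "norm (d k) \<le> (c + 1) * \<rho> ^ k" if "k \<ge> 1" for k
  proof -
    have c_\<rho>k: "0 \<le> c * \<rho> ^ k"
      using \<rho> K lam(1) by (simp add: c_def)
    have "lam * (norm (d k))\<^sup>2 \<le> (\<rho> ^ k)\<^sup>2 * K"
      using lam(2) V_le[OF that] by (rule order_trans)
    then have "(norm (d k))\<^sup>2 \<le> (\<rho> ^ k)\<^sup>2 * K / lam"
      by (metis lam(1) mult.commute pos_le_divide_eq)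
    also have "\<dots> = (c * \<rho> ^ k)\<^sup>2"
      using K lam(1) by (simp add: c_def power_mult_distrib)
    finally have "norm (d k) \<le> c * \<rho> ^ k"
      using c_\<rho>k by (rule power2_le_imp_le)
    also have "\<dots> \<le> (c + 1) * \<rho> ^ k"
      using \<rho> by (simp add: distrib_right)
    finally show ?thesis .
  qed
  moreover have "c + 1 > 0"
    using K lam(1) by (simp add: c_def add_nonneg_pos)
  ultimately show ?thesis
    by blast
qed

theorem iqc_R_linear_convergence:
  fixes \<xi> :: "nat \<Rightarrow> real^'n" and u :: "nat \<Rightarrow> real^'m" and \<xi>s :: "real^'n" and us :: "real^'m"
    and A P :: "real^'n^'n" and B :: "real^'m^'n" and N :: "real^('n + 'm)^('n + 'm)"
  assumes dyn: "\<And>k. k \<ge> 1 \<Longrightarrow> \<xi> (Suc k) = A *v \<xi> k + B *v u k"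
    and fixpt: "\<xi>s = A *v \<xi>s + B *v us"
    and iqc: "\<And>k. k \<ge> 1 \<Longrightarrow>
      stackvec (\<xi> k - \<xi>s) (u k - us) \<bullet> (N *v stackvec (\<xi> k - \<xi>s) (u k - us)) \<ge> 0"
    and h: "h \<ge> 0"
    and \<rho>: "\<rho> > 0"
    and P: "pos_def_mat P"
    and LMI: "neg_semidef_mat
               (blockmat (transpose A ** P ** A - \<rho>\<^sup>2 *\<^sub>R P) (transpose A ** P ** B)
                         (transpose B ** P ** A) (transpose B ** P ** B) + h *\<^sub>R N)"
  shows "\<exists>c>0. \<forall>k\<ge>1. norm (\<xi> k - \<xi>s) \<le> c * \<rho> ^ k"
proof -
  have error_dyn: "\<xi> (Suc k) - \<xi>s = A *v (\<xi> k - \<xi>s) + B *v (u k - us)" if "k \<ge> 1" for k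
    using dyn[OF that] fixpt by (simp add: matrix_vector_mult_diff_distrib algebra_simps)
  obtain lam where "lam > 0" "\<And>z. lam * (norm z)\<^sup>2 \<le> z \<bullet> (P *v z)"
    using pos_def_mat_quadratic_form_ge[OF P] by blast
  then show ?thesis
    using \<rho> iqc_lyapunov_decrease[OF LMI h iqc] error_dyn
    by (intro R_linear_if_lyapunov_contraction[where V = "\<lambda>z. z \<bullet> (P *v z)"]) auto
qed

theorem theorem1:
  fixes f :: "real^'n \<Rightarrow> real" and grad :: "real^'n \<Rightarrow> real^'n"
    and L m \<mu> \<delta> \<alpha> c1 c2 h \<rho> :: real
    and x :: "nat \<Rightarrow> real^'n" and \<beta> :: "nat \<Rightarrow> real"
    and xs \<xi>s us ys :: "real^'n"
    and A B C E P :: "real^'n^'n"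
    and N :: "real^('n + 'n)^('n + 'n)"
  assumes grad: "\<forall>z. (f has_derivative (\<lambda>v. grad z \<bullet> v)) (at z)"
    and smooth: "L_smooth L grad"
    and sconv: "strongly_convex_grad m grad"
    and mL: "0 < m" "m \<le> L"
    and xs_min: "\<forall>y. f xs \<le> f y"
    and \<mu>: "0 < \<mu>" "\<mu> < 2"
    and \<delta>: "\<delta> > 0"
    and \<alpha>: "\<alpha> > 0"
    and c12: "0 < c1" "c1 \<le> c2"
    and \<beta>_pos: "\<forall>k\<ge>1. \<beta> k > 0"
    and \<beta>_bnd: "\<forall>k\<ge>1. c1 \<le> \<beta> k * (norm (x k - x (k - 1)) + \<delta>) powr (1 - \<mu>)
                       \<and> \<beta> k * (norm (x k - x (k - 1)) + \<delta>) powr (1 - \<mu>) \<le> c2"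
    and iter: "\<forall>k\<ge>1. x (Suc k) = x k - \<alpha> *\<^sub>R
                   ((\<beta> k * (norm (x k - x (k - 1)) + \<delta>) powr (1 - \<mu>)) *\<^sub>R grad (x k))"
    and ABCE: "A = mat 1" "B = - \<alpha> *\<^sub>R mat 1" "C = mat 1" "E = mat 1"
    and fixpt: "\<xi>s = A *v \<xi>s + B *v us" "ys = C *v \<xi>s"
               "\<exists>s. us = s *\<^sub>R grad ys" "xs = E *v \<xi>s" "xs = ys"
    and N_sym: "symmetric_mat N"
    and N_iqc: "\<forall>k\<ge>1. let e = stackvec (x k - \<xi>s)
                     ((\<beta> k * (norm (x k - x (k - 1)) + \<delta>) powr (1 - \<mu>)) *\<^sub>R grad (x k) - us)
                   in e \<bullet> (N *v e) \<ge> 0"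
    and h: "h \<ge> 0"
    and \<rho>: "0 < \<rho>" "\<rho> < 1"
    and P: "pos_def_mat P"
    and LMI: "neg_semidef_mat
               (blockmat (transpose A ** P ** A - \<rho>\<^sup>2 *\<^sub>R P) (transpose A ** P ** B)
                         (transpose B ** P ** A) (transpose B ** P ** B) + h *\<^sub>R N)"
  shows "\<exists>c>0. \<forall>k\<ge>1. norm (x k - xs) \<le> c * \<rho> ^ k"
proof -
  define u where "u k = (\<beta> k * (norm (x k - x (k - 1)) + \<delta>) powr (1 - \<mu>)) *\<^sub>R grad (x k)" for k
  have B_mult: "B *v v = - \<alpha> *\<^sub>R v" for v
    using ABCE(2) by (metis matrix_vector_mul_lid scaleR_matrix_vector_assoc)
  have dyn: "x (Suc k) = A *v x k + B *v u k" if "k \<ge> 1" for k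
    using iter that ABCE(1) by (simp add: u_def B_mult)
  have iqc: "stackvec (x k - \<xi>s) (u k - us) \<bullet> (N *v stackvec (x k - \<xi>s) (u k - us)) \<ge> 0"
    if "k \<ge> 1" for k
    using N_iqc that unfolding u_def Let_def by blast
  have "xs = \<xi>s"
    using fixpt(4) ABCE(4) by simp
  then show ?thesis
    using iqc_R_linear_convergence[where \<xi> = x and u = u, OF dyn fixpt(1) iqc h \<rho>(1) P LMI]
    by simp
qed

end
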